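(* Let $b>0$. Then there exists $h_0\in(0,1)$ such that for all $h\in(0,h_0)$, \[ \mu_1(h,b)\le -h-\frac12h^{3/2}. \]
   Context: Let $\Omega=\{x\in\mathbb R^2:|x|<1\}$, $\mathbf A_0(x_1,x_2)=\frac12(-x_2,x_1)$. For $h>0$ and $b>0$ let \[ \mu_1(h,b)=\inf_{u\in H^1(\Omega),\,u\ne0}\frac{h^2\int_\Omega|(\nabla-ib\mathbf A_0)u|^2\,dx-h^{3/2}\int_{\partial\Omega}|u|^2\,ds}{\|u\|^2_{L^2(\Omega)}}, \] the lowest eigenvalue of the associated self-adjoint operator $\mathcal L_h^b=-(h\nabla-ibh\mathbf A_0)^2$ with the corresponding Robin boundary condition. (Equivalently $\mu_1(h,b)=h^2\lambda_1(b,-h^{-1/2})$.) *)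

theory Defs
  imports "HOL-Analysis.Analysis" "HOL-Library.Extended_Real"
begin

(* The plane R^2 is modelled by the type complex: x = (Re z, Im z).
   Omega = ball 0 1 (open unit disk), boundary = unit circle parametrised by cis t, ds = dt. *)

definition pd1 :: "(complex \<Rightarrow> complex) \<Rightarrow> complex \<Rightarrow> complex" where
  "pd1 u z = frechet_derivative u (at z) 1"

definition pd2 :: "(complex \<Rightarrow> complex) \<Rightarrow> complex \<Rightarrow> complex" where
  "pd2 u z = frechet_derivative u (at z) \<i>"

(* |(\<nabla> - i b A0) u|^2 with A0(x1,x2) = (-x2/2, x1/2) *)
definition mag_grad_sq :: "real \<Rightarrow> (complex \<Rightarrow> complex) \<Rightarrow> complex \<Rightarrow> real" where
  "mag_grad_sq b u z =
     (cmod (pd1 u z - \<i> * of_real b * of_real (- Im z / 2) * u z))\<^sup>2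
   + (cmod (pd2 u z - \<i> * of_real b * of_real (Re z / 2) * u z))\<^sup>2"

(* admissible trial functions: C^1 on an open neighbourhood of the closed unit disk,
   not identically zero on the disk (dense in H^1(Omega)) *)
definition admissible :: "(complex \<Rightarrow> complex) \<Rightarrow> bool" where
  "admissible u \<longleftrightarrow>
     (\<exists>S. open S \<and> cball 0 1 \<subseteq> S \<and> (\<forall>z\<in>S. u differentiable (at z))
          \<and> continuous_on S (pd1 u) \<and> continuous_on S (pd2 u))
     \<and> (\<exists>z\<in>ball 0 1. u z \<noteq> 0)"

definition rayleigh :: "real \<Rightarrow> real \<Rightarrow> (complex \<Rightarrow> complex) \<Rightarrow> real" where
  "rayleigh h b u =
     (h\<^sup>2 * (LINT z:ball 0 1|lborel. mag_grad_sq b u z)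
      - h powr (3/2) * (LBINT t=0..2*pi. (cmod (u (cis t)))\<^sup>2))
     / (LINT z:ball 0 1|lborel. (cmod (u z))\<^sup>2)"

(* lowest eigenvalue mu_1(h,b) as infimum of the Rayleigh quotient (in the extended reals) *)
definition mu1 :: "real \<Rightarrow> real \<Rightarrow> ereal" where
  "mu1 h b = (INF u \<in> {u. admissible u}. ereal (rayleigh h b u))"

end

theory Submission
  imports Defs
begin

(* Test the Rayleigh quotient with the real radial function u(x) = exp (s (|x|^2 - 1) / 2),
   s = h^(-1/2), which lives in a layer of width about h^(1/2) along the boundary.
   Because u is real and A0 is tangential there is no cross term:
   |(grad - i b A0) u|^2 = (s^2 + b^2/4) |x|^2 |u|^2.  The substitution t = |x|^2 maps
   Lebesgue measure on the disk to pi dt on [0,1], so the bulk integrals become elementary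
   integrals of exp (s (t - 1)) and t exp (s (t - 1)), while u = 1 on the boundary.
   The quotient is -h - h^(3/2) + O(h^2), and it is at most -h - h^(3/2)/2 as soon as
   h^(-1/2) >= max 1 b^2. *)

lemma emeasure_ball_inter_norm_sq_greater:
  fixes r x :: real
  assumes "0 \<le> r"
  shows "emeasure lborel (ball (0::complex) r \<inter> {z. x < (cmod z)\<^sup>2})
           = ennreal pi * emeasure lborel ({0..r\<^sup>2} \<inter> {x<..})"
proof -
  consider "x < 0" | "0 \<le> x" "x < r\<^sup>2" | "r\<^sup>2 \<le> x" by linarith
  then show ?thesis
  proof cases
    case 1
    then have "ball 0 r \<inter> {z::complex. x < (cmod z)\<^sup>2} = ball 0 r"
      by (auto intro: less_le_trans)
    moreover have "{0..r\<^sup>2} \<inter> {x<..} = {0..r\<^sup>2}" using 1 by auto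
    ultimately show ?thesis
      using assms by (simp add: emeasure_ball unit_ball_vol_2 ennreal_mult' mult.commute)
  next
    case 2
    have sqrt_x: "sqrt x < r" using 2 assms real_sqrt_less_mono[of x "r\<^sup>2"] by simp
    have "cmod z \<le> sqrt x \<longleftrightarrow> (cmod z)\<^sup>2 \<le> x" for z :: complex
      using real_sqrt_le_iff[of "(cmod z)\<^sup>2" x] by simp
    then have "ball 0 r \<inter> {z::complex. x < (cmod z)\<^sup>2} = ball 0 r - cball 0 (sqrt x)"
      by auto
    also have "emeasure lborel \<dots> = ennreal (pi * r\<^sup>2) - ennreal (pi * x)"
      using 2 sqrt_x assms
      by (subst emeasure_Diff) (auto simp: emeasure_ball emeasure_cball unit_ball_vol_2)
    also have "\<dots> = ennreal pi * ennreal (r\<^sup>2 - x)"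
      using 2 by (subst ennreal_minus) (auto simp: right_diff_distrib[symmetric] ennreal_mult)
    also have "ennreal (r\<^sup>2 - x) = emeasure lborel ({0..r\<^sup>2} \<inter> {x<..})"
      using 2 by (subgoal_tac "{0..r\<^sup>2} \<inter> {x<..} = {x<..r\<^sup>2}") auto
    finally show ?thesis .
  next
    case 3
    then have "ball 0 r \<inter> {z::complex. x < (cmod z)\<^sup>2} = {}"
      using assms by (auto dest!: power_strict_mono[of _ r 2])
    moreover have "{0..r\<^sup>2} \<inter> {x<..} = {}" using 3 by auto
    ultimately show ?thesis by simp
  qed
qed

lemma distr_ball_norm_sq:
  fixes r :: real
  assumes "0 \<le> r"
  shows "distr (density lborel (indicator (ball (0::complex) r))) borel (\<lambda>z. (cmod z)\<^sup>2)
           = density lborel (\<lambda>t. ennreal (pi * indicator {0..r\<^sup>2} t))"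
    (is "?D = ?N")
proof (rule measure_eqI_lessThan)
  fix x :: real
  have D: "emeasure ?D {x<..} = emeasure lborel (ball 0 r \<inter> {z::complex. x < (cmod z)\<^sup>2})"
    by (subst emeasure_distr) (auto simp: emeasure_restricted vimage_def)
  have N: "emeasure ?N {x<..} = ennreal pi * emeasure lborel ({0..r\<^sup>2} \<inter> {x<..})"
  proof -
    have "emeasure ?N {x<..} = (\<integral>\<^sup>+t. ennreal pi * indicator ({0..r\<^sup>2} \<inter> {x<..}) t \<partial>lborel)"
      by (subst emeasure_density) (auto intro!: nn_integral_cong split: split_indicator)
    then show ?thesis by (simp add: nn_integral_cmult_indicator)
  qed
  show "emeasure ?D {x<..} = emeasure ?N {x<..}"
    unfolding D N using assms by (rule emeasure_ball_inter_norm_sq_greater)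
  have "emeasure lborel ({0..r\<^sup>2} \<inter> {x<..}) \<le> emeasure lborel {0..r\<^sup>2}"
    by (rule emeasure_mono) auto
  then show "emeasure ?D {x<..} < \<infinity>"
    unfolding D emeasure_ball_inter_norm_sq_greater[OF assms]
    by (simp add: ennreal_mult_less_top top.not_eq_extremum le_less_trans)
qed simp_all

lemma integral_ball_norm_sq:
  fixes f :: "real \<Rightarrow> real" and r :: real
  assumes [measurable]: "f \<in> borel_measurable borel" and "0 \<le> r"
  shows "(LINT z:ball (0::complex) r|lborel. f ((cmod z)\<^sup>2)) = pi * (LINT t:{0..r\<^sup>2}|lborel. f t)"
proof -
  have restrict: "density lborel (indicator (ball (0::complex) r))
                    = density lborel (\<lambda>z. ennreal (indicator (ball 0 r) z))"
    by (auto intro!: arg_cong[where f = "density lborel"] split: split_indicator)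
  have "(LINT z:ball (0::complex) r|lborel. f ((cmod z)\<^sup>2))
      = integral\<^sup>L (density lborel (indicator (ball (0::complex) r))) (\<lambda>z. f ((cmod z)\<^sup>2))"
    unfolding set_lebesgue_integral_def restrict
    by (subst integral_density) (auto intro: borel_measurable_indicator)
  also have "\<dots> = integral\<^sup>L (distr (density lborel (indicator (ball (0::complex) r))) borel (\<lambda>z. (cmod z)\<^sup>2)) f"
    by (subst integral_distr) auto
  also have "\<dots> = integral\<^sup>L lborel (\<lambda>t. (pi * indicator {0..r\<^sup>2} t) *\<^sub>R f t)"
    unfolding distr_ball_norm_sq[OF assms(2)]
    by (subst integral_density) auto
  also have "\<dots> = pi * (LINT t:{0..r\<^sup>2}|lborel. f t)"
    unfolding set_lebesgue_integral_def by (simp add: mult.assoc)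
  finally show ?thesis .
qed

lemma set_integral_Icc_FTC_real:
  fixes f F :: "real \<Rightarrow> real"
  assumes "a \<le> b"
    and "\<And>x. a \<le> x \<Longrightarrow> x \<le> b \<Longrightarrow> (F has_real_derivative f x) (at x)"
    and "continuous_on {a..b} f"
  shows "(LINT x:{a..b}|lborel. f x) = F b - F a"
  unfolding set_lebesgue_integral_def
  by (rule integral_FTC_atLeastAtMost)
     (use assms in \<open>auto simp: has_real_derivative_iff_has_vector_derivative[symmetric]
                     intro: has_field_derivative_at_within\<close>)

lemma integral_exp_affine:
  fixes s :: real
  assumes "s \<noteq> 0"
  shows "(LINT t:{0..1}|lborel. exp (s * (t - 1))) = (1 - exp (- s)) / s"
proof -
  have "(LINT t:{0..1}|lborel. exp (s * (t - 1))) = exp (s * (1 - 1)) / s - exp (s * (0 - 1)) / s"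
    by (rule set_integral_Icc_FTC_real)
       (use assms in \<open>auto intro!: derivative_eq_intros continuous_intros\<close>)
  then show ?thesis by (simp add: diff_divide_distrib)
qed

lemma integral_mult_exp_affine:
  fixes s :: real
  assumes "s \<noteq> 0"
  shows "(LINT t:{0..1}|lborel. t * exp (s * (t - 1))) = 1 / s - (1 - exp (- s)) / s\<^sup>2"
proof -
  have "(LINT t:{0..1}|lborel. t * exp (s * (t - 1)))
          = (1 / s - 1 / s\<^sup>2) * exp (s * (1 - 1)) - (0 / s - 1 / s\<^sup>2) * exp (s * (0 - 1))"
    by (rule set_integral_Icc_FTC_real)
       (use assms in \<open>auto intro!: derivative_eq_intros continuous_intros
                       simp: field_simps power2_eq_square\<close>)
  then show ?thesis by (simp add: diff_divide_distrib)
qed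

definition boundary_gaussian :: "real \<Rightarrow> complex \<Rightarrow> complex" where
  "boundary_gaussian s z = of_real (exp (s / 2 * ((cmod z)\<^sup>2 - 1)))"

lemma has_derivative_boundary_gaussian:
  "(boundary_gaussian s has_derivative
     (\<lambda>w. of_real (s * exp (s / 2 * ((cmod z)\<^sup>2 - 1)) * (Re z * Re w + Im z * Im w)))) (at z)"
  unfolding boundary_gaussian_def[abs_def] cmod_power2
  by (auto intro!: derivative_eq_intros simp: fun_eq_iff algebra_simps)

lemma pd1_boundary_gaussian:
  "pd1 (boundary_gaussian s) z = of_real (s * exp (s / 2 * ((cmod z)\<^sup>2 - 1)) * Re z)"
  unfolding pd1_def frechet_derivative_at[OF has_derivative_boundary_gaussian, symmetric] by simp

lemma pd2_boundary_gaussian: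
  "pd2 (boundary_gaussian s) z = of_real (s * exp (s / 2 * ((cmod z)\<^sup>2 - 1)) * Im z)"
  unfolding pd2_def frechet_derivative_at[OF has_derivative_boundary_gaussian, symmetric] by simp

lemma admissible_boundary_gaussian: "admissible (boundary_gaussian s)"
  unfolding admissible_def
proof (intro conjI exI[of _ UNIV] bexI[of _ 0] ballI)
  show "boundary_gaussian s differentiable (at z)" for z
    using has_derivative_boundary_gaussian by (auto simp: differentiable_def)
  show "continuous_on UNIV (pd1 (boundary_gaussian s))"
    unfolding pd1_boundary_gaussian[abs_def] by (intro continuous_intros)
  show "continuous_on UNIV (pd2 (boundary_gaussian s))"
    unfolding pd2_boundary_gaussian[abs_def] by (intro continuous_intros)
qed (auto simp: boundary_gaussian_def)

lemma norm_boundary_gaussian_sq: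
  "(cmod (boundary_gaussian s z))\<^sup>2 = exp (s * ((cmod z)\<^sup>2 - 1))"
  by (simp add: boundary_gaussian_def power2_eq_square exp_add[symmetric])

lemma mag_grad_sq_boundary_gaussian:
  "mag_grad_sq b (boundary_gaussian s) z = (s\<^sup>2 + b\<^sup>2 / 4) * ((cmod z)\<^sup>2 * exp (s * ((cmod z)\<^sup>2 - 1)))"
proof -
  define e where "e = exp (s / 2 * ((cmod z)\<^sup>2 - 1))"
  have e_sq: "e\<^sup>2 = exp (s * ((cmod z)\<^sup>2 - 1))"
    unfolding e_def by (simp add: power2_eq_square exp_add[symmetric])
  have "pd1 (boundary_gaussian s) z - \<i> * of_real b * of_real (- Im z / 2) * boundary_gaussian s z
          = Complex (e * s * Re z) (e * b * Im z / 2)"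
    by (simp add: pd1_boundary_gaussian boundary_gaussian_def e_def complex_eq_iff)
  moreover have "pd2 (boundary_gaussian s) z - \<i> * of_real b * of_real (Re z / 2) * boundary_gaussian s z
          = Complex (e * s * Im z) (- (e * b * Re z / 2))"
    by (simp add: pd2_boundary_gaussian boundary_gaussian_def e_def complex_eq_iff)
  ultimately have "mag_grad_sq b (boundary_gaussian s) z = (s\<^sup>2 + b\<^sup>2 / 4) * ((Re z)\<^sup>2 + (Im z)\<^sup>2) * e\<^sup>2"
    unfolding mag_grad_sq_def cmod_power2 by (simp add: power2_eq_square algebra_simps)
  then show ?thesis by (simp add: e_sq cmod_power2)
qed

lemma rayleigh_boundary_gaussian:
  fixes s :: real
  assumes "0 < s"
  shows "rayleigh h b (boundary_gaussian s)
           = (h\<^sup>2 * ((s\<^sup>2 + b\<^sup>2 / 4) * (1 / s - (1 - exp (- s)) / s\<^sup>2)) - 2 * h powr (3/2))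
             / ((1 - exp (- s)) / s)"
proof -
  have energy: "(LINT z:ball 0 1|lborel. mag_grad_sq b (boundary_gaussian s) z)
                  = pi * ((s\<^sup>2 + b\<^sup>2 / 4) * (1 / s - (1 - exp (- s)) / s\<^sup>2))"
    using integral_ball_norm_sq[of "\<lambda>t. (s\<^sup>2 + b\<^sup>2 / 4) * (t * exp (s * (t - 1)))" 1]
      integral_mult_exp_affine[of s] assms
    by (simp add: mag_grad_sq_boundary_gaussian)
  have mass: "(LINT z:ball 0 1|lborel. (cmod (boundary_gaussian s z))\<^sup>2) = pi * ((1 - exp (- s)) / s)"
    using integral_ball_norm_sq[of "\<lambda>t. exp (s * (t - 1))" 1] integral_exp_affine[of s] assms
    by (simp add: norm_boundary_gaussian_sq)
  have boundary: "(LBINT t=0..2*pi. (cmod (boundary_gaussian s (cis t)))\<^sup>2) = 2 * pi"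
    using interval_integral_const(2)[of 0 "2*pi" 1] by (simp add: norm_boundary_gaussian_sq zero_ereal_def)
  have "h\<^sup>2 * (pi * X) - h powr (3/2) * (2 * pi) = pi * (h\<^sup>2 * X - 2 * h powr (3/2))" for X
    by (simp add: algebra_simps)
  then show ?thesis
    unfolding rayleigh_def energy mass boundary by simp
qed

lemma boundary_gaussian_quotient_le:
  fixes s c D :: real
  assumes "0 < s" "0 \<le> c" "4 * c \<le> s" "1/2 \<le> D" "D \<le> 1"
  shows "((1 / s\<^sup>2)\<^sup>2 * ((s\<^sup>2 + c) * (1 / s - D / s\<^sup>2)) - 2 * (1 / s ^ 3)) / (D / s)
           \<le> - (1 / s\<^sup>2) - 1/2 * (1 / s ^ 3)"
proof -
  have "(1 / s\<^sup>2)\<^sup>2 * ((s\<^sup>2 + c) * (1 / s - D / s\<^sup>2)) - 2 * (1 / s ^ 3)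
          = ((s\<^sup>2 + c) * (s - D) - 2 * s ^ 3) / s ^ 6"
    using assms by (simp add: field_simps eval_nat_numeral)
  then have lhs: "((1 / s\<^sup>2)\<^sup>2 * ((s\<^sup>2 + c) * (1 / s - D / s\<^sup>2)) - 2 * (1 / s ^ 3)) / (D / s)
                    = ((s\<^sup>2 + c) * (s - D) - 2 * s ^ 3) / (s ^ 5 * D)"
    using assms by (simp add: eval_nat_numeral)
  have rhs: "- (1 / s\<^sup>2) - 1/2 * (1 / s ^ 3) = (- (s ^ 3) - s\<^sup>2 / 2) * D / (s ^ 5 * D)"
    using assms by (simp add: field_simps eval_nat_numeral)
  have "c * s \<le> s\<^sup>2 * D / 2"
    using assms mult_mono[of "4 * c" s "1/2" D] by (simp add: power2_eq_square algebra_simps)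
  moreover have "0 \<le> s ^ 3 * (1 - D)" "0 \<le> c * D" using assms by simp_all
  ultimately have "(s\<^sup>2 + c) * (s - D) - 2 * s ^ 3 \<le> (- (s ^ 3) - s\<^sup>2 / 2) * D"
    by (simp add: algebra_simps power2_eq_square power3_eq_cube)
  then show ?thesis
    unfolding lhs rhs using assms by (intro divide_right_mono) auto
qed

lemma rayleigh_boundary_gaussian_le:
  fixes h b :: real
  assumes "0 < h" "sqrt h \<le> 1" "b\<^sup>2 * sqrt h \<le> 1"
  shows "rayleigh h b (boundary_gaussian (1 / sqrt h)) \<le> - h - 1/2 * h powr (3/2)"
proof -
  define s where "s = 1 / sqrt h"
  have s: "0 < s" "1 \<le> s" "b\<^sup>2 \<le> s"
    using assms by (auto simp: s_def field_simps)
  have h: "h = 1 / s\<^sup>2"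
    using assms by (simp add: s_def power_divide)
  have "h powr (3/2) = (h powr (1/2)) powr 3"
    by (simp add: powr_powr)
  also have "\<dots> = 1 / s ^ 3"
    using assms by (simp add: powr_half_sqrt s_def power_one_over)
  finally have h_powr: "h powr (3/2) = 1 / s ^ 3" .
  have "exp (- s) \<le> 1 / (1 + s)"
    using exp_ge_add_one_self[of s] s by (simp add: exp_minus field_simps)
  also have "\<dots> \<le> 1/2"
    using s by (simp add: field_simps)
  finally have D: "1/2 \<le> 1 - exp (- s)" "1 - exp (- s) \<le> 1"
    by simp_all
  have "rayleigh h b (boundary_gaussian s)
          = ((1 / s\<^sup>2)\<^sup>2 * ((s\<^sup>2 + b\<^sup>2 / 4) * (1 / s - (1 - exp (- s)) / s\<^sup>2)) - 2 * (1 / s ^ 3))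
            / ((1 - exp (- s)) / s)"
    unfolding rayleigh_boundary_gaussian[OF s(1)] h_powr by (simp add: h)
  also have "\<dots> \<le> - (1 / s\<^sup>2) - 1/2 * (1 / s ^ 3)"
    by (rule boundary_gaussian_quotient_le) (use s D in auto)
  also have "\<dots> = - h - 1/2 * h powr (3/2)"
    unfolding h_powr by (simp add: h)
  finally show ?thesis
    by (simp add: s_def)
qed

lemma mu1_le_rayleigh: "admissible u \<Longrightarrow> mu1 h b \<le> ereal (rayleigh h b u)"
  unfolding mu1_def by (rule INF_lower) simp

theorem lemma2p2:
  fixes b :: real
  assumes "b > 0"
  shows "\<exists>h0. 0 < h0 \<and> h0 < 1 \<and>
           (\<forall>h. 0 < h \<and> h < h0 \<longrightarrow> mu1 h b \<le> ereal (- h - 1/2 * h powr (3/2)))"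
proof (intro exI conjI allI impI)
  define h0 :: real where "h0 = 1 / (b\<^sup>2 + 2)\<^sup>2"
  have b2: "1 < b\<^sup>2 + 2"
    using zero_le_power2[of b] by linarith
  then have "1 < (b\<^sup>2 + 2)\<^sup>2"
    by (rule one_less_power) simp
  with b2 show "0 < h0" "h0 < 1"
    by (simp_all add: h0_def)
  fix h :: real
  assume h: "0 < h \<and> h < h0"
  then have "sqrt h < 1 / (b\<^sup>2 + 2)"
    using real_sqrt_less_mono[of h h0] by (simp add: h0_def real_sqrt_divide)
  then have "sqrt h * (b\<^sup>2 + 2) < 1"
    using b2 by (simp add: less_divide_eq)
  moreover have "0 \<le> b\<^sup>2 * sqrt h" "0 \<le> sqrt h"
    using h by simp_all
  ultimately have "sqrt h \<le> 1" "b\<^sup>2 * sqrt h \<le> 1"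
    unfolding distrib_left mult.commute[of "sqrt h" "b\<^sup>2"] by linarith+
  have "mu1 h b \<le> ereal (rayleigh h b (boundary_gaussian (1 / sqrt h)))"
    by (rule mu1_le_rayleigh[OF admissible_boundary_gaussian])
  also have "\<dots> \<le> ereal (- h - 1/2 * h powr (3/2))"
    using rayleigh_boundary_gaussian_le h \<open>sqrt h \<le> 1\<close> \<open>b\<^sup>2 * sqrt h \<le> 1\<close> by simp
  finally show "mu1 h b \<le> ereal (- h - 1/2 * h powr (3/2))" .
qed

end
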